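(* Let $n,m,k,t\ge 1$ and $r\ge 0$ be integers with $n\ge k$ and $m\ge \lceil k/t\rceil + r$. Then the minimum total storage $\sum_{i=1}^m|S_i|$ of an erasure combinatorial batch code for consecutive files with parameters $n,m,k,t,r$ equals $(r+1)n$.
   Context: Files are indexed by $X=\{1,\dots,n\}$ in their linear order, and $m$ servers store subsets $S_1,\dots,S_m\subseteq X$. The family $(S_1,\dots,S_m)$ is an erasure combinatorial batch code for consecutive files with parameters $n,m,k,t,r$ if for every set $X'=\{a,a+1,\dots,a+c-1\}\subseteq X$ of $c\le k$ consecutive indices and every subset $J\subseteq\{1,\dots,m\}$ with $|J|\ge m-r$, there exist subsets $C_j\subseteq S_j$ ($j\in J$) with $|C_j|\le t$ and $X'=\bigcup_{j\in J}C_j$. The total storage is $\sum_{i=1}^m |S_i|$. *)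

theory Defs
  imports Complex_Main
begin

definition ecbc_consecutive :: "nat \<Rightarrow> nat \<Rightarrow> nat \<Rightarrow> nat \<Rightarrow> nat \<Rightarrow> (nat \<Rightarrow> nat set) \<Rightarrow> bool" where
  "ecbc_consecutive n m k t r S \<longleftrightarrow>
     (\<forall>i\<in>{1..m}. S i \<subseteq> {1..n}) \<and>
     (\<forall>a c J. 1 \<le> c \<and> c \<le> k \<and> {a..<a+c} \<subseteq> {1..n} \<and>
        J \<subseteq> {1..m} \<and> card J + r \<ge> m \<longrightarrow>
        (\<exists>C. (\<forall>j\<in>J. C j \<subseteq> S j \<and> card (C j) \<le> t) \<and> {a..<a+c} = (\<Union>j\<in>J. C j)))"

definition total_storage :: "nat \<Rightarrow> (nat \<Rightarrow> nat set) \<Rightarrow> nat" where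
  "total_storage m S = (\<Sum>i=1..m. card (S i))"

end

theory Submission
  imports Defs
begin

text \<open>
  Lower bound: if some file lies on at most \<open>r\<close> servers, erasing exactly those servers
  leaves the one-file window containing it unrecoverable; so every file is stored at least
  \<open>r + 1\<close> times, and double counting gives total storage at least \<open>(r + 1) n\<close>.

  Upper bound: put \<open>q = m - r \<ge> \<lceil>k/t\<rceil>\<close>, give file \<open>x\<close> the class
  \<open>(x mod q t) div t < q\<close>, and store class \<open>c\<close> on the \<open>r + 1\<close> consecutive servers
  \<open>c + 1, \<dots>, c + 1 + r\<close>. If at most \<open>r\<close> servers are erased, the surviving server of
  rank \<open>c\<close> among the survivors lies in that range, so it can serve class \<open>c\<close>; and a window
  of at most \<open>k \<le> q t\<close> consecutive files has distinct residues mod \<open>q t\<close>, hence at most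
  \<open>t\<close> files of each class.
\<close>

lemma sum_card_eq_sum_card_containing:
  assumes "finite A" "finite I" "\<forall>i\<in>I. S i \<subseteq> A"
  shows "(\<Sum>i\<in>I. card (S i)) = (\<Sum>x\<in>A. card {i\<in>I. x \<in> S i})"
proof -
  have "(\<Sum>i\<in>I. card (S i)) = (\<Sum>i\<in>I. \<Sum>x\<in>A. of_bool (x \<in> S i))"
  proof (rule sum.cong[OF refl])
    fix i assume "i \<in> I"
    then have "A \<inter> {x. x \<in> S i} = S i" using assms(3) by blast
    then show "card (S i) = (\<Sum>x\<in>A. of_bool (x \<in> S i))" using assms(1) by simp
  qed
  also have "\<dots> = (\<Sum>x\<in>A. \<Sum>i\<in>I. of_bool (x \<in> S i))"
    by (rule sum.swap)
  also have "\<dots> = (\<Sum>x\<in>A. card {i\<in>I. x \<in> S i})"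
    using assms(2) by (simp add: Int_def)
  finally show ?thesis .
qed

lemma inj_on_mod_interval: "inj_on (\<lambda>x::nat. x mod N) {b..<b + N}"
proof (rule linorder_inj_onI')
  fix x y assume "x \<in> {b..<b + N}" "y \<in> {b..<b + N}" "x < y"
  then have "\<not> N dvd y - x" by (intro nat_dvd_not_less) auto
  then show "x mod N \<noteq> y mod N"
    using \<open>x < y\<close> by (metis mod_eq_dvd_iff_nat less_imp_le)
qed

lemma div_eq_imp_in_block:
  fixes y t v :: nat
  assumes "0 < t" "y div t = v"
  shows "y \<in> {v * t..<v * t + t}"
  using assms div_times_less_eq_dividend[of y t] dividend_less_times_div[of t y]
  by (auto simp: mult.commute)

lemma card_interval_mod_div_le:
  fixes a c N t v :: nat
  assumes "c \<le> N" "0 < t"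
  shows "card {x\<in>{a..<a + c}. x mod N div t = v} \<le> t"
proof -
  let ?A = "{x\<in>{a..<a + c}. x mod N div t = v}"
  have "inj_on (\<lambda>x. x mod N) ?A"
    by (rule inj_on_subset[OF inj_on_mod_interval[of N a]]) (use assms in auto)
  then have "card ?A = card ((\<lambda>x. x mod N) ` ?A)"
    by (rule card_image[symmetric])
  also have "\<dots> \<le> card {v * t..<v * t + t}"
    using assms(2) by (intro card_mono) (auto intro: div_eq_imp_in_block)
  finally show ?thesis by simp
qed

lemma le_nat_ceiling_divide_mult:
  fixes k t :: nat
  assumes "0 < t"
  shows "k \<le> nat \<lceil>real k / real t\<rceil> * t"
proof -
  have "real k / real t \<le> real (nat \<lceil>real k / real t\<rceil>)" by linarith
  then have "real k \<le> real (nat \<lceil>real k / real t\<rceil>) * real t"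
    using assms by (subst (asm) pos_divide_le_eq) auto
  then show ?thesis by (simp only: of_nat_mult[symmetric] of_nat_le_iff)
qed

definition rank_in :: "nat set \<Rightarrow> nat \<Rightarrow> nat" where
  "rank_in J j = card {i\<in>J. i < j}"

lemma rank_in_strict_mono:
  assumes "finite J" "i \<in> J" "j \<in> J" "i < j"
  shows "rank_in J i < rank_in J j"
  unfolding rank_in_def using assms by (intro psubset_card_mono) auto

lemma rank_in_image:
  assumes "finite J"
  shows "rank_in J ` J = {..<card J}"
proof -
  have "inj_on (rank_in J) J"
    using rank_in_strict_mono[OF assms] by (intro linorder_inj_onI') (metis less_irrefl)
  moreover have "rank_in J ` J \<subseteq> {..<card J}"
    unfolding rank_in_def using assms by (auto intro!: psubset_card_mono)
  ultimately show ?thesis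
    by (intro card_subset_eq) (auto simp: card_image)
qed

lemma rank_in_less:
  assumes "0 \<notin> J" "j \<in> J"
  shows "rank_in J j < j"
proof -
  have "{i\<in>J. i < j} \<subseteq> {1..<j}" using assms(1) by (auto simp: Suc_le_eq intro!: gr0I)
  then have "rank_in J j \<le> card {1..<j}" unfolding rank_in_def by (intro card_mono) auto
  then show ?thesis using assms by (cases j) auto
qed

lemma rank_in_ge:
  assumes "J \<subseteq> {1..m}" "j \<in> J"
  shows "j \<le> rank_in J j + 1 + (m - card J)"
proof -
  have "finite J" using assms(1) finite_subset by blast
  have "{1..<j} \<subseteq> {i\<in>J. i < j} \<union> ({1..m} - J)" using assms by auto
  then have "card {1..<j} \<le> card ({i\<in>J. i < j} \<union> ({1..m} - J))"
    using \<open>finite J\<close> by (intro card_mono) auto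
  also have "\<dots> \<le> rank_in J j + card ({1..m} - J)"
    unfolding rank_in_def by (rule card_Un_le)
  also have "card ({1..m} - J) = m - card J"
    using assms(1) \<open>finite J\<close> by (simp add: card_Diff_subset)
  finally show ?thesis by simp
qed

lemma ecbc_card_servers_storing_ge:
  assumes ecbc: "ecbc_consecutive n m k t r S" and "1 \<le> k" "x \<in> {1..n}"
  shows "r + 1 \<le> card {i\<in>{1..m}. x \<in> S i}"
proof (rule ccontr)
  let ?J = "{1..m} - {i\<in>{1..m}. x \<in> S i}"
  assume "\<not> r + 1 \<le> card {i\<in>{1..m}. x \<in> S i}"
  then have card_J: "m \<le> card ?J + r" by (subst card_Diff_subset) auto
  have "\<exists>C. (\<forall>j\<in>?J. C j \<subseteq> S j \<and> card (C j) \<le> t) \<and> {x..<x + 1} = (\<Union>j\<in>?J. C j)"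
    by (rule ecbc[unfolded ecbc_consecutive_def, THEN conjunct2, rule_format])
      (use card_J \<open>1 \<le> k\<close> \<open>x \<in> {1..n}\<close> in auto)
  then obtain C where C: "\<forall>j\<in>?J. C j \<subseteq> S j" "{x..<x + 1} = (\<Union>j\<in>?J. C j)"
    by blast
  have "x \<in> {x..<x + 1}" by simp
  then show False using C by blast
qed

lemma ecbc_total_storage_ge:
  assumes "ecbc_consecutive n m k t r S" "1 \<le> k"
  shows "(r + 1) * n \<le> total_storage m S"
proof -
  have "(r + 1) * n = (\<Sum>x\<in>{1..n}. r + 1)" by simp
  also have "\<dots> \<le> (\<Sum>x\<in>{1..n}. card {i\<in>{1..m}. x \<in> S i})"
    using ecbc_card_servers_storing_ge[OF assms] by (intro sum_mono)
  also have "\<dots> = total_storage m S"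
    using assms(1) unfolding total_storage_def ecbc_consecutive_def
    by (intro sum_card_eq_sum_card_containing[symmetric]) auto
  finally show ?thesis .
qed

definition block_class :: "nat \<Rightarrow> nat \<Rightarrow> nat \<Rightarrow> nat" where
  "block_class q t x = x mod (q * t) div t"

definition staircase_code :: "nat \<Rightarrow> nat \<Rightarrow> nat \<Rightarrow> nat \<Rightarrow> nat \<Rightarrow> nat set" where
  "staircase_code n q r t i =
     {x\<in>{1..n}. i \<in> {block_class q t x + 1..block_class q t x + 1 + r}}"

lemma block_class_less: "0 < q \<Longrightarrow> block_class q t x < q"
  unfolding block_class_def
  by (cases "t = 0") (simp_all add: less_mult_imp_div_less)

lemma staircase_code_servers_storing:
  assumes "0 < q" "x \<in> {1..n}"
  shows "{i\<in>{1..q + r}. x \<in> staircase_code n q r t i}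
       = {block_class q t x + 1..block_class q t x + 1 + r}"
  using assms block_class_less[OF assms(1), of t x] unfolding staircase_code_def by auto

lemma total_storage_staircase_code:
  assumes "0 < q"
  shows "total_storage (q + r) (staircase_code n q r t) = (r + 1) * n"
proof -
  have "total_storage (q + r) (staircase_code n q r t)
      = (\<Sum>x\<in>{1..n}. card {i\<in>{1..q + r}. x \<in> staircase_code n q r t i})"
    unfolding total_storage_def
    by (rule sum_card_eq_sum_card_containing) (auto simp: staircase_code_def)
  also have "\<dots> = (\<Sum>x\<in>{1..n}. r + 1)"
    using staircase_code_servers_storing[OF assms] by simp
  finally show ?thesis by simp
qed

lemma staircase_code_ecbc:
  assumes "k \<le> q * t"
  shows "ecbc_consecutive n (q + r) k t r (staircase_code n q r t)"
  unfolding ecbc_consecutive_def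
proof (intro conjI allI impI)
  show "\<forall>i\<in>{1..q + r}. staircase_code n q r t i \<subseteq> {1..n}"
    by (auto simp: staircase_code_def)
  fix a c J
  assume "1 \<le> c \<and> c \<le> k \<and> {a..<a + c} \<subseteq> {1..n} \<and> J \<subseteq> {1..q + r} \<and> q + r \<le> card J + r"
  then have c: "1 \<le> c" "c \<le> q * t" and window: "{a..<a + c} \<subseteq> {1..n}"
    and J: "J \<subseteq> {1..q + r}" "q \<le> card J"
    using assms by auto
  have "0 < q * t" using c by linarith
  then have "0 < q" "0 < t" by simp_all
  have "finite J" "0 \<notin> J"
    using J(1) by (auto intro: finite_subset)
  define C where "C j = {x\<in>{a..<a + c}. block_class q t x = rank_in J j}" for j
  have "C j \<subseteq> staircase_code n q r t j" if "j \<in> J" for j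
  proof -
    have "rank_in J j + 1 \<le> j" using rank_in_less[OF \<open>0 \<notin> J\<close> that] by simp
    moreover have "j \<le> rank_in J j + 1 + r" using rank_in_ge[OF J(1) that] J(2) by simp
    ultimately show ?thesis using window by (auto simp: C_def staircase_code_def)
  qed
  moreover have "card (C j) \<le> t" for j
    unfolding C_def block_class_def using c(2) \<open>0 < t\<close> by (rule card_interval_mod_div_le)
  moreover have "{a..<a + c} = (\<Union>j\<in>J. C j)"
  proof
    show "(\<Union>j\<in>J. C j) \<subseteq> {a..<a + c}" by (auto simp: C_def)
    show "{a..<a + c} \<subseteq> (\<Union>j\<in>J. C j)"
    proof
      fix x assume x: "x \<in> {a..<a + c}"
      have "block_class q t x \<in> rank_in J ` J"
        using block_class_less[OF \<open>0 < q\<close>, of t x] J(2) rank_in_image[OF \<open>finite J\<close>] by auto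
      then show "x \<in> (\<Union>j\<in>J. C j)" using x by (auto simp: C_def)
    qed
  qed
  ultimately show "\<exists>C. (\<forall>j\<in>J. C j \<subseteq> staircase_code n q r t j \<and> card (C j) \<le> t)
      \<and> {a..<a + c} = (\<Union>j\<in>J. C j)"
    by (intro exI[of _ C]) blast
qed

theorem mainTheorem3:
  fixes n m k t r :: nat
  assumes "n \<ge> 1" "m \<ge> 1" "k \<ge> 1" "t \<ge> 1" "n \<ge> k"
    and "m \<ge> nat \<lceil>real k / real t\<rceil> + r"
  shows "(\<exists>S. ecbc_consecutive n m k t r S) \<and>
         (LEAST s. \<exists>S. ecbc_consecutive n m k t r S \<and> total_storage m S = s) = (r + 1) * n"
proof -
  define q where "q = m - r"
  have "k \<le> nat \<lceil>real k / real t\<rceil> * t"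
    using assms(4) by (intro le_nat_ceiling_divide_mult) simp
  also have "\<dots> \<le> q * t"
    using add_le_imp_le_diff[OF assms(6)] unfolding q_def by (rule mult_le_mono1)
  finally have "k \<le> q * t" .
  then have "0 < q" using assms(3) by (cases q) auto
  then have m: "m = q + r" unfolding q_def by simp
  let ?S = "staircase_code n q r t"
  have S: "ecbc_consecutive n m k t r ?S" "total_storage m ?S = (r + 1) * n"
    unfolding m using staircase_code_ecbc[OF \<open>k \<le> q * t\<close>] total_storage_staircase_code[OF \<open>0 < q\<close>]
    by auto
  have "(LEAST s. \<exists>S. ecbc_consecutive n m k t r S \<and> total_storage m S = s) = (r + 1) * n"
    using S ecbc_total_storage_ge[OF _ assms(3)] by (intro Least_equality) blast+
  with S show ?thesis by blast
qed

end
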